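(* Let $G$ be a realization of a bounded budget network creation game $(b_1,\dots,b_n)$-BG and let $u$ be a vertex of $G$. If either $c_{MAX}(u)\le 2$ and $u$ is not contained in any brace, or $c_{MAX}(u)=1$, then $u$ is playing its best response in both the MAX version and the SUM version of the game.
   Context: Bounded budget network creation game $(b_1,\dots,b_n)$-BG: $n$ players with integer budgets $0\le b_i\le n-1$. A strategy of player $i$ is a set $S_i\subseteq\{1,\dots,n\}\setminus\{i\}$ with $|S_i|=b_i$; a profile is realized by the directed graph $G$ on $u_1,\dots,u_n$ with an arc $\overrightarrow{u_iu_j}$ iff $j\in S_i$ (a realization). A brace is a pair $\{u,v\}$ such that both $\overrightarrow{uv}$ and $\overrightarrow{vu}$ are arcs. $U(G)$ is the undirected multigraph obtained by ignoring directions; $\operatorname{dist}(u,v)$ is the distance in $U(G)$, defined as $n^2$ between different components. SUM cost: $c_{SUM}(u)=\sum_v\operatorname{dist}(u,v)$; MAX cost: $c_{MAX}(u)=\max_v\operatorname{dist}(u,v)+(\kappa-1)n^2$, $\kappa$ the number of components of $U(G)$. A vertex plays its best response (in a version) if it cannot decrease its cost (of that version) by changing its own strategy while the other strategies are fixed. *)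

theory Defs
  imports Main
begin

text \<open>Players/vertices are 0,...,n-1 (vertex u_i is i). A profile S assigns to each
player i < n its strategy S i; the realization has an arc i->j iff j \<in> S i.\<close>

definition valid_profile :: "nat \<Rightarrow> (nat \<Rightarrow> nat) \<Rightarrow> (nat \<Rightarrow> nat set) \<Rightarrow> bool" where
  "valid_profile n b S \<longleftrightarrow> (\<forall>i<n. S i \<subseteq> {0..<n} - {i} \<and> card (S i) = b i)"

definition adj :: "nat \<Rightarrow> (nat \<Rightarrow> nat set) \<Rightarrow> nat \<Rightarrow> nat \<Rightarrow> bool" where
  "adj n S u w \<longleftrightarrow> u < n \<and> w < n \<and> (w \<in> S u \<or> u \<in> S w)"

fun reach :: "nat \<Rightarrow> (nat \<Rightarrow> nat set) \<Rightarrow> nat \<Rightarrow> nat \<Rightarrow> nat \<Rightarrow> bool" where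
  "reach n S 0 u v = (u = v)"
| "reach n S (Suc k) u v = (\<exists>w. adj n S u w \<and> reach n S k w v)"

definition connected_in :: "nat \<Rightarrow> (nat \<Rightarrow> nat set) \<Rightarrow> nat \<Rightarrow> nat \<Rightarrow> bool" where
  "connected_in n S u v \<longleftrightarrow> (\<exists>k. reach n S k u v)"

definition gdist :: "nat \<Rightarrow> (nat \<Rightarrow> nat set) \<Rightarrow> nat \<Rightarrow> nat \<Rightarrow> nat" where
  "gdist n S u v = (if connected_in n S u v then (LEAST k. reach n S k u v) else n^2)"

definition num_components :: "nat \<Rightarrow> (nat \<Rightarrow> nat set) \<Rightarrow> nat" where
  "num_components n S = card {C. \<exists>u<n. C = {v. v < n \<and> connected_in n S u v}}"

definition c_SUM :: "nat \<Rightarrow> (nat \<Rightarrow> nat set) \<Rightarrow> nat \<Rightarrow> nat" where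
  "c_SUM n S u = (\<Sum>v<n. gdist n S u v)"

definition c_MAX :: "nat \<Rightarrow> (nat \<Rightarrow> nat set) \<Rightarrow> nat \<Rightarrow> nat" where
  "c_MAX n S u = Max {gdist n S u v | v. v < n} + (num_components n S - 1) * n^2"

definition in_brace :: "nat \<Rightarrow> (nat \<Rightarrow> nat set) \<Rightarrow> nat \<Rightarrow> bool" where
  "in_brace n S u \<longleftrightarrow> (\<exists>v<n. v \<in> S u \<and> u \<in> S v)"

definition best_response ::
  "(nat \<Rightarrow> (nat \<Rightarrow> nat set) \<Rightarrow> nat \<Rightarrow> nat) \<Rightarrow> nat \<Rightarrow> (nat \<Rightarrow> nat) \<Rightarrow> (nat \<Rightarrow> nat set) \<Rightarrow> nat \<Rightarrow> bool" where
  "best_response c n b S u \<longleftrightarrow>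
     (\<forall>T. T \<subseteq> {0..<n} - {u} \<and> card T = b u \<longrightarrow> c n S u \<le> c n (S(u := T)) u)"

end

theory Submission
  imports Defs
begin

text \<open>Every vertex other than u is at distance at least 1 from u, and at distance at least 2
unless it is a neighbour, so c_SUM(u) + deg(u) \<ge> 2(n-1) in every realization, with equality
when c_MAX(u) \<le> 2. A vertex in no brace already has the largest degree any of its strategies
can give it (its out-arcs and in-arcs are disjoint), and when c_MAX(u) = 1 its degree is n-1
anyway; so no deviation lowers the SUM cost. For MAX, a deviation could only win by reaching
cost 1, i.e. degree n-1, which forces u's present degree to be n-1 and its present cost 1.\<close>

definition neighbours :: "nat \<Rightarrow> (nat \<Rightarrow> nat set) \<Rightarrow> nat \<Rightarrow> nat set" where
  "neighbours n S u = {v. v \<noteq> u \<and> adj n S u v}"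

definition in_neighbours :: "nat \<Rightarrow> (nat \<Rightarrow> nat set) \<Rightarrow> nat \<Rightarrow> nat set" where
  "in_neighbours n S u = {v. v < n \<and> v \<noteq> u \<and> u \<in> S v}"

lemma neighbours_subset: "neighbours n S u \<subseteq> {0..<n} - {u}"
  unfolding neighbours_def adj_def by auto

lemma neighbours_eq_Un_in_neighbours:
  assumes "u < n" "S u \<subseteq> {0..<n} - {u}"
  shows "neighbours n S u = S u \<union> in_neighbours n S u"
  using assms unfolding neighbours_def in_neighbours_def adj_def by auto

lemma in_neighbours_fun_upd [simp]: "in_neighbours n (S(u := T)) u = in_neighbours n S u"
  unfolding in_neighbours_def by auto

lemma card_neighbours_fun_upd_le:
  assumes "u < n" "S u \<subseteq> {0..<n} - {u}" "\<not> in_brace n S u"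
    and "T \<subseteq> {0..<n} - {u}" "card T = card (S u)"
  shows "card (neighbours n (S(u := T)) u) \<le> card (neighbours n S u)"
proof -
  have fin: "finite (S u)" "finite (in_neighbours n S u)"
    using assms(2) finite_subset unfolding in_neighbours_def by auto
  have disj: "S u \<inter> in_neighbours n S u = {}"
    using assms(2,3) unfolding in_brace_def in_neighbours_def by auto
  have "card (neighbours n (S(u := T)) u) = card (T \<union> in_neighbours n S u)"
    using neighbours_eq_Un_in_neighbours[of u n "S(u := T)"] assms(1,4) by simp
  also have "\<dots> \<le> card T + card (in_neighbours n S u)"
    by (rule card_Un_le)
  also have "\<dots> = card (S u \<union> in_neighbours n S u)"
    using card_Un_disjoint[OF fin disj] assms(5) by simp
  also have "\<dots> = card (neighbours n S u)"
    using neighbours_eq_Un_in_neighbours[of u n S, OF assms(1,2)] by simp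
  finally show ?thesis .
qed

lemma gdist_self [simp]: "gdist n S u u = 0"
proof -
  have "connected_in n S u u" unfolding connected_in_def by (rule exI[of _ 0]) simp
  moreover have "(LEAST k. reach n S k u u) = 0" by (rule Least_equality) auto
  ultimately show ?thesis unfolding gdist_def by simp
qed

lemma gdist_le_1_if_adj: assumes "adj n S u v" shows "gdist n S u v \<le> 1"
proof -
  have r: "reach n S 1 u v" using assms by simp
  then have "connected_in n S u v" unfolding connected_in_def by blast
  moreover have "(LEAST k. reach n S k u v) \<le> 1" using r by (rule Least_le)
  ultimately show ?thesis unfolding gdist_def by simp
qed

lemma gdist_ge_1:
  assumes "v \<noteq> u" "u < n"
  shows "1 \<le> gdist n S u v"
proof (cases "connected_in n S u v")
  case True
  define k where "k = (LEAST k. reach n S k u v)"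
  have "reach n S k u v"
    using True unfolding k_def connected_in_def by (rule LeastI_ex)
  then have "k \<noteq> 0" using assms(1) by (rule_tac notI) simp
  then show ?thesis using True unfolding gdist_def k_def by simp
next
  case False
  then show ?thesis using assms(2) unfolding gdist_def by simp
qed

lemma gdist_ge_2_if_not_adj:
  assumes "v \<noteq> u" "\<not> adj n S u v" "2 \<le> n"
  shows "2 \<le> gdist n S u v"
proof (cases "connected_in n S u v")
  case True
  define k where "k = (LEAST k. reach n S k u v)"
  have "reach n S k u v"
    using True unfolding k_def connected_in_def by (rule LeastI_ex)
  then have "k \<noteq> 0" "k \<noteq> 1" using assms(1,2) by (rule_tac notI, simp)+
  then show ?thesis using True unfolding gdist_def k_def by simp
next
  case False
  have "2 * 1 \<le> n * n" using assms(3) by (intro mult_le_mono) auto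
  then show ?thesis using False unfolding gdist_def by (simp add: power2_eq_square)
qed

lemma gdist_le_c_MAX:
  assumes "v < n"
  shows "gdist n S u v \<le> c_MAX n S u"
proof -
  have "gdist n S u v \<le> Max {gdist n S u v | v. v < n}"
    using assms by (intro Max_ge) auto
  then show ?thesis unfolding c_MAX_def by simp
qed

lemma c_MAX_ge_1:
  assumes "2 \<le> n" "u < n"
  shows "1 \<le> c_MAX n S u"
proof -
  have "\<exists>v<n. v \<noteq> u" using assms(1) by (intro exI[of _ "if u = 0 then 1 else 0"]) auto
  then obtain v where "v < n" "v \<noteq> u" by blast
  then show ?thesis using gdist_ge_1[of v u n S] gdist_le_c_MAX[of v n S u] assms(2) by linarith
qed

text \<open>A cost below n^2 rules out a second component, so c_MAX is then just the eccentricity.\<close>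

lemma c_MAX_le_if_gdist_le:
  assumes "c_MAX n S u < n^2" "\<And>v. v < n \<Longrightarrow> gdist n S u v \<le> k"
  shows "c_MAX n S u \<le> k"
proof -
  have "(num_components n S - 1) * n^2 \<le> c_MAX n S u" unfolding c_MAX_def by simp
  then have "(num_components n S - 1) * n^2 < n^2" using assms(1) by linarith
  then have no_penalty: "num_components n S - 1 = 0"
    using mult_le_mono1[of 1 "num_components n S - 1" "n^2"] by (cases "num_components n S - 1") auto
  have "Max {gdist n S u v | v. v < n} \<le> k"
    using assms by (cases "n = 0") (auto intro!: Max.boundedI)
  then show ?thesis unfolding c_MAX_def no_penalty by simp
qed

lemma c_MAX_le_1_iff:
  assumes "2 \<le> n" "u < n" "c_MAX n S u < n^2"
  shows "c_MAX n S u \<le> 1 \<longleftrightarrow> neighbours n S u = {0..<n} - {u}"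
proof
  assume cost: "c_MAX n S u \<le> 1"
  have "adj n S u v" if "v < n" "v \<noteq> u" for v
  proof (rule ccontr)
    assume "\<not> adj n S u v"
    then have "2 \<le> gdist n S u v" using gdist_ge_2_if_not_adj that(2) assms(1) by blast
    then show False using gdist_le_c_MAX[OF that(1), of S u] cost by linarith
  qed
  then show "neighbours n S u = {0..<n} - {u}"
    using neighbours_subset[of n S u] by (auto simp: neighbours_def)
next
  assume all: "neighbours n S u = {0..<n} - {u}"
  have "gdist n S u v \<le> 1" if "v < n" for v
  proof (cases "v = u")
    case False
    then have "v \<in> neighbours n S u" using all that by simp
    then have "adj n S u v" unfolding neighbours_def by simp
    then show ?thesis by (rule gdist_le_1_if_adj)
  qed simp
  then show "c_MAX n S u \<le> 1" by (rule c_MAX_le_if_gdist_le[OF assms(3)])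
qed

lemma sum_one_two_plus_card:
  assumes "finite B" "A \<subseteq> B"
  shows "(\<Sum>v\<in>B. if v \<in> A then 1 else 2::nat) + card A = 2 * card B"
proof -
  have fin: "finite A" "finite (B - A)" using assms finite_subset by auto
  have "(\<Sum>v\<in>B. if v \<in> A then 1 else 2::nat) = card A + 2 * card (B - A)"
    using assms by (simp add: sum.If_cases Int_absorb1 Diff_eq)
  moreover have "card (B - A) = card B - card A"
    using fin(1) assms(2) by (rule card_Diff_subset)
  moreover have "card A \<le> card B"
    using assms by (rule card_mono)
  ultimately show ?thesis by simp
qed

lemma c_SUM_eq_sum_others:
  assumes "u < n"
  shows "c_SUM n S u = (\<Sum>v\<in>{0..<n} - {u}. gdist n S u v)"
proof -
  have "c_SUM n S u = gdist n S u u + (\<Sum>v\<in>{0..<n} - {u}. gdist n S u v)"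
    unfolding c_SUM_def lessThan_atLeast0 using assms by (subst sum.remove[of _ u]) auto
  then show ?thesis by simp
qed

lemma c_SUM_plus_card_neighbours_ge:
  assumes "2 \<le> n" "u < n"
  shows "2 * (n - 1) \<le> c_SUM n S u + card (neighbours n S u)"
proof -
  let ?V = "{0..<n} - {u}" and ?N = "neighbours n S u"
  have "2 * (n - 1) = (\<Sum>v\<in>?V. if v \<in> ?N then 1 else 2::nat) + card ?N"
    using sum_one_two_plus_card[of ?V ?N] neighbours_subset assms(2) by simp
  also have "(\<Sum>v\<in>?V. if v \<in> ?N then 1 else 2::nat) \<le> c_SUM n S u"
    unfolding c_SUM_eq_sum_others[OF assms(2)]
    using gdist_ge_1[of _ u n S] gdist_ge_2_if_not_adj[of _ u n S] assms
    by (intro sum_mono) (auto simp: neighbours_def)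
  finally show ?thesis by simp
qed

lemma c_SUM_plus_card_neighbours_le:
  assumes "u < n" "c_MAX n S u \<le> 2"
  shows "c_SUM n S u + card (neighbours n S u) \<le> 2 * (n - 1)"
proof -
  let ?V = "{0..<n} - {u}" and ?N = "neighbours n S u"
  have "c_SUM n S u \<le> (\<Sum>v\<in>?V. if v \<in> ?N then 1 else 2::nat)"
    unfolding c_SUM_eq_sum_others[OF assms(1)]
  proof (rule sum_mono)
    fix v assume "v \<in> ?V"
    then show "gdist n S u v \<le> (if v \<in> ?N then 1 else 2)"
      using gdist_le_1_if_adj[of n S u v] gdist_le_c_MAX[of v n S u] assms(2)
      by (auto simp: neighbours_def)
  qed
  also have "\<dots> + card ?N = 2 * (n - 1)"
    using sum_one_two_plus_card[of ?V ?N] neighbours_subset assms(1) by simp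
  finally show ?thesis by simp
qed

lemma two_less_square: "2 \<le> n \<Longrightarrow> 2 < (n::nat)^2"
  using mult_le_mono[of 2 n 2 n] by (simp add: power2_eq_square)

lemma c_SUM_le_if_card_neighbours_le:
  assumes "2 \<le> n" "u < n" "c_MAX n S u \<le> 2"
    and "card (neighbours n S' u) \<le> card (neighbours n S u)"
  shows "c_SUM n S u \<le> c_SUM n S' u"
  using c_SUM_plus_card_neighbours_le[OF assms(2,3)]
    c_SUM_plus_card_neighbours_ge[OF assms(1,2), of S'] assms(4)
  by linarith

lemma c_MAX_le_if_card_neighbours_le:
  assumes "2 \<le> n" "u < n" "c_MAX n S u \<le> 2"
    and "card (neighbours n S' u) \<le> card (neighbours n S u)"
  shows "c_MAX n S u \<le> c_MAX n S' u"
proof (cases "2 \<le> c_MAX n S' u")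
  case True
  then show ?thesis using assms(3) by linarith
next
  case False
  have small: "2 < n^2" using two_less_square[OF assms(1)] .
  have "neighbours n S' u = {0..<n} - {u}"
    using c_MAX_le_1_iff[OF assms(1,2), of S'] False small by simp
  then have "card ({0..<n} - {u}) \<le> card (neighbours n S u)"
    using assms(4) by simp
  then have "neighbours n S u = {0..<n} - {u}"
    using neighbours_subset by (metis card_seteq finite_Diff finite_atLeastLessThan)
  then have "c_MAX n S u \<le> 1"
    using c_MAX_le_1_iff[OF assms(1,2)] assms(3) small by simp
  then show ?thesis using c_MAX_ge_1[OF assms(1,2), of S'] by linarith
qed

theorem mainTheorem12:
  fixes n :: nat and b :: "nat \<Rightarrow> nat" and S :: "nat \<Rightarrow> nat set" and u :: nat
  assumes budgets: "\<forall>i<n. b i \<le> n - 1"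
    and real: "valid_profile n b S"
    and u: "u < n"
    and hyp: "(c_MAX n S u \<le> 2 \<and> \<not> in_brace n S u) \<or> c_MAX n S u = 1"
  shows "best_response c_MAX n b S u \<and> best_response c_SUM n b S u"
proof -
  have Su: "S u \<subseteq> {0..<n} - {u}" "card (S u) = b u"
    using real u unfolding valid_profile_def by auto
  have cost: "c_MAX n S u \<le> 2" using hyp by auto
  have "c_MAX n S u \<le> c_MAX n (S(u := T)) u \<and> c_SUM n S u \<le> c_SUM n (S(u := T)) u"
    if T: "T \<subseteq> {0..<n} - {u}" "card T = b u" for T
  proof (cases "2 \<le> n")
    case False
    then have "{0..<n} - {u} = {}" using u by auto
    then have "T = S u" using T Su by blast
    then have "S(u := T) = S" by simp
    then show ?thesis by simp
  next
    case n: True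
    have "card (neighbours n (S(u := T)) u) \<le> card (neighbours n S u)"
    proof (cases "in_brace n S u")
      case False
      then show ?thesis using card_neighbours_fun_upd_le[of u n S, OF u Su(1)] T Su(2) by simp
    next
      case True
      then have "neighbours n S u = {0..<n} - {u}"
        using hyp c_MAX_le_1_iff[OF n u, of S] two_less_square[OF n] by simp
      then show ?thesis using neighbours_subset by (metis card_mono finite_Diff finite_atLeastLessThan)
    qed
    then show ?thesis
      using c_MAX_le_if_card_neighbours_le c_SUM_le_if_card_neighbours_le n u cost by blast
  qed
  then show ?thesis unfolding best_response_def by blast
qed

end
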